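(* Let $\lambda_1\ge\lambda_2\ge\lambda_3\ge 0$ with $\lambda_1+\lambda_2+\lambda_3=1$, $\lambda_3>0$ and $\lambda_1\neq\lambda_3$. Then there is no maximally entangled state in the set $S(\lambda_1,\lambda_2,\lambda_3,0)$.
   Context: $\mathcal{D}$ denotes the set of two-qubit density matrices, i.e. $\rho\in\mathbb{C}^{4\times4}$ with $\rho=\rho^\dagger$, $\rho\ge 0$, $\mathrm{tr}\rho=1$, acting on $\mathbb{C}^2\otimes\mathbb{C}^2$. For eigenvalues $\lambda_1\ge\lambda_2\ge\lambda_3\ge\lambda_4\ge0$ with $\sum_i\lambda_i=1$, $S(\lambda_1,\lambda_2,\lambda_3,\lambda_4)=\{\rho\in\mathcal{D}:\text{the eigenvalues of }\rho\text{ (with multiplicity) are }\lambda_1,\lambda_2,\lambda_3,\lambda_4\}$. For a set $S\subseteq\mathcal{D}$, a state $\rho\in S$ is called a maximally entangled state in $S$ if for every $\sigma\in S$ there exists an LOCC map (a quantum channel implementable by local operations on each qubit and classical communication between the two parties) $\Lambda$ with $\Lambda(\rho)=\sigma$. *)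

theory Defs
  imports "Jordan_Normal_Form.Schur_Decomposition" "Jordan_Normal_Form.Char_Poly"
begin

text \<open>Kronecker (tensor) product; row index of A (x) B is i_A * dim_row B + i_B,
  i.e. the first tensor factor is party A (Alice), the second is party B (Bob).\<close>
definition kron :: "complex mat \<Rightarrow> complex mat \<Rightarrow> complex mat" where
  "kron A B = mat (dim_row A * dim_row B) (dim_col A * dim_col B)
     (\<lambda>(i,j). A $$ (i div dim_row B, j div dim_col B) * B $$ (i mod dim_row B, j mod dim_col B))"

definition mtrace :: "complex mat \<Rightarrow> complex" where
  "mtrace A = (\<Sum>i<dim_row A. A $$ (i,i))"

definition density_matrix :: "nat \<Rightarrow> complex mat \<Rightarrow> bool" where
  "density_matrix n \<rho> \<longleftrightarrow>
     \<rho> \<in> carrier_mat n n \<and> mat_adjoint \<rho> = \<rho> \<and>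
     (\<forall>v \<in> carrier_vec n. 0 \<le> Re (\<Sum>i<n. cnj (v $ i) * (\<rho> *\<^sub>v v) $ i)) \<and>
     mtrace \<rho> = 1"

definition two_qubit_states :: "complex mat set" where
  "two_qubit_states = {\<rho>. density_matrix 4 \<rho>}"

definition spectrum_class :: "real \<Rightarrow> real \<Rightarrow> real \<Rightarrow> real \<Rightarrow> complex mat set" where
  "spectrum_class l1 l2 l3 l4 = {\<rho> \<in> two_qubit_states.
     char_poly \<rho> = [:- complex_of_real l1, 1:] * [:- complex_of_real l2, 1:] *
                    [:- complex_of_real l3, 1:] * [:- complex_of_real l4, 1:]}"

definition kraus_sum :: "nat \<Rightarrow> complex mat list \<Rightarrow> complex mat" where
  "kraus_sum n Ks = foldr (\<lambda>K acc. mat_adjoint K * K + acc) Ks (0\<^sub>m n n)"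

definition apply_kraus :: "nat \<Rightarrow> complex mat list \<Rightarrow> complex mat \<Rightarrow> complex mat" where
  "apply_kraus n Ks \<rho> = foldr (\<lambda>K acc. K * \<rho> * mat_adjoint K + acc) Ks (0\<^sub>m n n)"

text \<open>locc_kraus a b a' b' Ks: Ks is the list of (branch) Kraus operators of a finite-round,
  finite-outcome LOCC protocol taking C^a (x) C^b to C^a' (x) C^b'.  In each round one party
  performs a local quantum instrument (given by Kraus operators, possibly changing its local
  dimension, which covers local ancillas and discarding), announces the outcome, and the
  rest of the protocol may depend on all previous outcomes.\<close>
inductive locc_kraus :: "nat \<Rightarrow> nat \<Rightarrow> nat \<Rightarrow> nat \<Rightarrow> complex mat list \<Rightarrow> bool" where
  idle: "locc_kraus a b a b [1\<^sub>m (a * b)]"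
| alice: "\<lbrakk> set Ks \<subseteq> carrier_mat c a; kraus_sum a Ks = 1\<^sub>m a;
            \<forall>j < length Ks. locc_kraus c b a' b' (Ls j) \<rbrakk> \<Longrightarrow>
          locc_kraus a b a' b'
            (concat (map (\<lambda>j. map (\<lambda>L. L * kron (Ks ! j) (1\<^sub>m b)) (Ls j)) [0..<length Ks]))"
| bob: "\<lbrakk> set Ks \<subseteq> carrier_mat c b; kraus_sum b Ks = 1\<^sub>m b;
            \<forall>j < length Ks. locc_kraus a c a' b' (Ls j) \<rbrakk> \<Longrightarrow>
          locc_kraus a b a' b'
            (concat (map (\<lambda>j. map (\<lambda>L. L * kron (1\<^sub>m a) (Ks ! j)) (Ls j)) [0..<length Ks]))"

definition locc_map :: "(complex mat \<Rightarrow> complex mat) \<Rightarrow> bool" where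
  "locc_map \<Lambda> \<longleftrightarrow> (\<exists>Ks. locc_kraus 2 2 2 2 Ks \<and> \<Lambda> = apply_kraus 4 Ks)"

definition maximally_entangled_in :: "complex mat set \<Rightarrow> complex mat \<Rightarrow> bool" where
  "maximally_entangled_in S \<rho> \<longleftrightarrow>
     \<rho> \<in> S \<and> (\<forall>\<sigma> \<in> S. \<exists>\<Lambda>. locc_map \<Lambda> \<and> \<Lambda> \<rho> = \<sigma>)"

end

theory Submission
  imports Defs
begin

text \<open>
  Suppose \<open>R\<close> were maximally entangled in \<open>S(l1, l2, l3, 0)\<close>. Every Kraus operator of an
  LOCC protocol is a product \<open>A \<otimes> B\<close>, and if the target \<open>\<sigma> = \<Sum> K R K\<^sup>\<dagger>\<close> has a null
  vector \<open>z\<close>, then every \<open>K\<^sup>\<dagger> z\<close> is a null vector of \<open>R\<close>. The functional \<open>witness a\<close> is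
  nonnegative on each term \<open>K R K\<^sup>\<dagger>\<close> with \<open>det A = 0\<close> or \<open>det B = 0\<close>; so for targets on which
  it is negative some term has an invertible product \<open>K\<close>, and \<open>K\<^sup>\<dagger>\<close> multiplies the
  coefficient determinant of \<open>z\<close> by \<open>cnj (det A det B) \<noteq> 0\<close>. Choosing two such targets
  in \<open>S(l1, l2, l3, 0)\<close> (this needs \<open>l1 \<noteq> l3\<close>), one whose null vector is the product vector
  \<open>|10\<rangle>\<close> and one whose null vector is entangled, gives null vectors of \<open>R\<close> of both kinds. But
  \<open>0\<close> is a simple eigenvalue of \<open>R\<close> (as \<open>l3 > 0\<close>), so all its null vectors are proportional.
\<close>

lemma sum_div_mod:
  fixes f :: "nat \<Rightarrow> nat \<Rightarrow> 'a::comm_monoid_add"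
  shows "(\<Sum>k<m * n. f (k div n) (k mod n)) = (\<Sum>i<m. \<Sum>j<n. f i j)"
proof -
  have "(\<Sum>i<m. \<Sum>j<n. f i j) = (\<Sum>(i, j)\<in>{..<m} \<times> {..<n}. f i j)"
    by (simp add: sum.cartesian_product)
  also have "\<dots> = (\<Sum>k<m * n. f (k div n) (k mod n))"
  proof (rule sum.reindex_bij_witness[where i = "\<lambda>k. (k div n, k mod n)"
                                      and j = "\<lambda>(i, j). i * n + j"])
    have "i * n + j < m * n" if "i < m" "j < n" for i j
    proof -
      have "i * n + j < Suc i * n" using that by simp
      also have "\<dots> \<le> m * n" using that by (intro mult_le_mono1) simp
      finally show ?thesis .
    qed
    then show "\<And>a. a \<in> {..<m} \<times> {..<n} \<Longrightarrow> (case a of (i, j) \<Rightarrow> i * n + j) \<in> {..<m * n}"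
      by auto
  qed (auto simp: less_mult_imp_div_less intro!: mod_less_divisor Nat.gr0I)
  finally show ?thesis by simp
qed

lemma sum_less_4: "(\<Sum>j<(4::nat). f j) = f 0 + f 1 + f 2 + (f 3 :: 'a::comm_monoid_add)"
  by (simp add: eval_nat_numeral add.assoc)

lemma less_4_cases: "(i::nat) < 4 \<Longrightarrow> i = 0 \<or> i = 1 \<or> i = 2 \<or> i = 3"
  by auto

section \<open>Kronecker products and LOCC protocols\<close>

lemma kron_dim [simp]:
  "dim_row (kron A B) = dim_row A * dim_row B" "dim_col (kron A B) = dim_col A * dim_col B"
  by (simp_all add: kron_def)

lemma kron_carrier:
  "A \<in> carrier_mat m n \<Longrightarrow> B \<in> carrier_mat r s \<Longrightarrow> kron A B \<in> carrier_mat (m * r) (n * s)"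
  by auto

lemma index_kron:
  "i < dim_row A * dim_row B \<Longrightarrow> j < dim_col A * dim_col B \<Longrightarrow>
   kron A B $$ (i, j)
   = A $$ (i div dim_row B, j div dim_col B) * B $$ (i mod dim_row B, j mod dim_col B)"
  by (simp add: kron_def)

lemma index_kron_2x2:
  assumes "A \<in> carrier_mat 2 2" and "B \<in> carrier_mat 2 2" and "i < 4" and "j < 4"
  shows "kron A B $$ (i, j) = A $$ (i div 2, j div 2) * B $$ (i mod 2, j mod 2)"
  using assms by (simp add: index_kron)

lemma kron_mult:
  assumes A: "A \<in> carrier_mat m n" and C: "C \<in> carrier_mat n p"
    and B: "B \<in> carrier_mat r s" and D: "D \<in> carrier_mat s t"
  shows "kron A B * kron C D = kron (A * C) (B * D)"
proof (rule eq_matI)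
  fix i j assume "i < dim_row (kron (A * C) (B * D))" "j < dim_col (kron (A * C) (B * D))"
  with A B C D have i: "i < m * r" and j: "j < p * t" by auto
  then have "r > 0" "t > 0" by (auto intro!: Nat.gr0I)
  with i j have ij: "i div r < m" "i mod r < r" "j div t < p" "j mod t < t"
    by (auto simp: less_mult_imp_div_less)
  have "(kron A B * kron C D) $$ (i, j) = (\<Sum>k<n * s. kron A B $$ (i, k) * kron C D $$ (k, j))"
    using A B C D i j by (simp add: scalar_prod_def atLeast0LessThan)
  also have "\<dots> = (\<Sum>k<n * s. (A $$ (i div r, k div s) * C $$ (k div s, j div t))
                             * (B $$ (i mod r, k mod s) * D $$ (k mod s, j mod t)))"
    using A B C D i j by (intro sum.cong refl) (simp add: index_kron mult_ac)
  also have "\<dots> = (\<Sum>k1<n. \<Sum>k2<s. (A $$ (i div r, k1) * C $$ (k1, j div t))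
                             * (B $$ (i mod r, k2) * D $$ (k2, j mod t)))"
    by (rule sum_div_mod)
  also have "\<dots> = (\<Sum>k1<n. A $$ (i div r, k1) * C $$ (k1, j div t))
                * (\<Sum>k2<s. B $$ (i mod r, k2) * D $$ (k2, j mod t))"
    by (simp add: sum_product)
  also have "\<dots> = kron (A * C) (B * D) $$ (i, j)"
    using A B C D i j ij by (simp add: index_kron scalar_prod_def atLeast0LessThan)
  finally show "(kron A B * kron C D) $$ (i, j) = kron (A * C) (B * D) $$ (i, j)" .
qed auto

lemma one_mat_kron: "1\<^sub>m (a * b) = kron (1\<^sub>m a) (1\<^sub>m b)"
proof (rule eq_matI)
  fix i j assume "i < dim_row (kron (1\<^sub>m a) (1\<^sub>m b))" "j < dim_col (kron (1\<^sub>m a) (1\<^sub>m b))"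
  then have i: "i < a * b" and j: "j < a * b" by auto
  then have "b > 0" by (auto intro!: Nat.gr0I)
  with i j have "i div b < a" "i mod b < b" "j div b < a" "j mod b < b"
    by (auto simp: less_mult_imp_div_less)
  moreover have "i = j \<longleftrightarrow> i div b = j div b \<and> i mod b = j mod b"
    by (metis div_mult_mod_eq)
  ultimately show "1\<^sub>m (a * b) $$ (i, j) = kron (1\<^sub>m a) (1\<^sub>m b) $$ (i, j)"
    using i j by (simp add: index_kron)
qed auto

lemma det_2x2:
  assumes "A \<in> carrier_mat 2 2"
  shows "det A = A $$ (0, 0) * A $$ (1, 1) - A $$ (0, 1) * A $$ (1, 0)"
proof -
  have "det A = (\<Sum>i<2. A $$ (i, 0) * cofactor A i 0)"
    using laplace_expansion_column[OF assms] by simp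
  also have "\<dots> = A $$ (0, 0) * A $$ (1, 1) - A $$ (0, 1) * A $$ (1, 0)"
    using assms by (simp add: cofactor_def det_single mat_delete_def eval_nat_numeral)
  finally show ?thesis .
qed

lemma locc_kraus_product_form:
  assumes "locc_kraus a b a' b' Ks" and "K \<in> set Ks"
  shows "\<exists>A B. A \<in> carrier_mat a' a \<and> B \<in> carrier_mat b' b \<and> K = kron A B"
  using assms
proof (induction arbitrary: K rule: locc_kraus.induct)
  case (idle a b)
  then have "K = kron (1\<^sub>m a) (1\<^sub>m b)" by (simp add: one_mat_kron)
  then show ?case using one_carrier_mat by blast
next
  case (alice Ks c a b a' b' Ls)
  then obtain j L where j: "j < length Ks" and L: "L \<in> set (Ls j)"
    and K: "K = L * kron (Ks ! j) (1\<^sub>m b)"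
    by auto
  from alice.IH j L obtain A B where A: "A \<in> carrier_mat a' c" and B: "B \<in> carrier_mat b' b"
    and "L = kron A B"
    by blast
  moreover have Kj: "Ks ! j \<in> carrier_mat c a" using alice.hyps(1) j by auto
  ultimately have "K = kron (A * Ks ! j) B"
    using K kron_mult[OF A Kj B one_carrier_mat] B by simp
  with A B Kj show ?case by (metis mult_carrier_mat)
next
  case (bob Ks c b a a' b' Ls)
  then obtain j L where j: "j < length Ks" and L: "L \<in> set (Ls j)"
    and K: "K = L * kron (1\<^sub>m a) (Ks ! j)"
    by auto
  from bob.IH j L obtain A B where A: "A \<in> carrier_mat a' a" and B: "B \<in> carrier_mat b' c"
    and "L = kron A B"
    by blast
  moreover have Kj: "Ks ! j \<in> carrier_mat c b" using bob.hyps(1) j by auto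
  ultimately have "K = kron A (B * Ks ! j)"
    using K kron_mult[OF A one_carrier_mat B Kj] A by simp
  with A B Kj show ?case by (metis mult_carrier_mat)
qed

lemma locc_kraus_carrier:
  assumes "locc_kraus 2 2 2 2 Ks"
  shows "set Ks \<subseteq> carrier_mat 4 4"
proof
  fix K assume "K \<in> set Ks"
  then obtain A B where "A \<in> carrier_mat 2 2" "B \<in> carrier_mat 2 2" "K = kron A B"
    using locc_kraus_product_form[OF assms] by blast
  then show "K \<in> carrier_mat 4 4" using kron_carrier[of A 2 2 B 2 2] by simp
qed

section \<open>Sesquilinear forms and density matrices\<close>

lemma index_mat_adjoint:
  "i < dim_col A \<Longrightarrow> j < dim_row A \<Longrightarrow> mat_adjoint A $$ (i, j) = cnj (A $$ (j, i))"
  unfolding mat_adjoint_def by (simp add: mat_of_rows_def)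

lemma mat_adjoint_dim [simp]:
  "dim_row (mat_adjoint A) = dim_col A" "dim_col (mat_adjoint A) = dim_row A"
  unfolding mat_adjoint_def by (simp_all add: mat_of_rows_def)

lemma mat_adjoint_carrier: "A \<in> carrier_mat m n \<Longrightarrow> mat_adjoint A \<in> carrier_mat n m"
  by auto

lemma index_mult_mat_vec_sum:
  "A \<in> carrier_mat m n \<Longrightarrow> v \<in> carrier_vec n \<Longrightarrow> i < m \<Longrightarrow> (A *\<^sub>v v) $ i = (\<Sum>j<n. A $$ (i, j) * v $ j)"
  by (auto simp: scalar_prod_def atLeast0LessThan)

lemma mult_mat_vec_zero: "A \<in> carrier_mat n m \<Longrightarrow> A *\<^sub>v 0\<^sub>v m = 0\<^sub>v n"
  by (intro eq_vecI) auto

definition sesq_form :: "nat \<Rightarrow> complex mat \<Rightarrow> complex vec \<Rightarrow> complex vec \<Rightarrow> complex" where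
  "sesq_form n X u v = (\<Sum>i<n. \<Sum>j<n. cnj (u $ i) * X $$ (i, j) * v $ j)"

lemma sesq_form_mult_mat_vec:
  assumes "X \<in> carrier_mat n n" and "v \<in> carrier_vec n"
  shows "sesq_form n X u v = (\<Sum>i<n. cnj (u $ i) * (X *\<^sub>v v) $ i)"
  using assms unfolding sesq_form_def
  by (intro sum.cong refl)
     (simp add: index_mult_mat_vec_sum sum_distrib_left mult.assoc del: index_mult_mat_vec)

lemma sum_cnj_mult_mat_vec_adjoint:
  assumes K: "K \<in> carrier_mat n m" and u: "u \<in> carrier_vec n" and y: "y \<in> carrier_vec m"
  shows "(\<Sum>i<n. cnj (u $ i) * (K *\<^sub>v y) $ i) = (\<Sum>k<m. cnj ((mat_adjoint K *\<^sub>v u) $ k) * y $ k)"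
proof -
  have "(\<Sum>i<n. cnj (u $ i) * (K *\<^sub>v y) $ i) = (\<Sum>i<n. \<Sum>k<m. cnj (u $ i) * K $$ (i, k) * y $ k)"
    using K y by (intro sum.cong refl)
      (simp add: index_mult_mat_vec_sum sum_distrib_left mult.assoc del: index_mult_mat_vec)
  also have "\<dots> = (\<Sum>k<m. \<Sum>i<n. cnj (u $ i) * K $$ (i, k) * y $ k)"
    by (rule sum.swap)
  also have "\<dots> = (\<Sum>k<m. cnj ((mat_adjoint K *\<^sub>v u) $ k) * y $ k)"
    using K u mat_adjoint_carrier[OF K]
    by (intro sum.cong refl)
       (simp add: index_mult_mat_vec_sum index_mat_adjoint sum_distrib_left sum_distrib_right
          mult_ac del: index_mult_mat_vec)
  finally show ?thesis .
qed

lemma sesq_form_congruence: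
  assumes K: "K \<in> carrier_mat n n" and R: "R \<in> carrier_mat n n"
    and u: "u \<in> carrier_vec n" and v: "v \<in> carrier_vec n"
  shows "sesq_form n (K * R * mat_adjoint K) u v
       = sesq_form n R (mat_adjoint K *\<^sub>v u) (mat_adjoint K *\<^sub>v v)"
proof -
  have K': "mat_adjoint K \<in> carrier_mat n n" using K by (rule mat_adjoint_carrier)
  have "sesq_form n (K * R * mat_adjoint K) u v
      = (\<Sum>i<n. cnj (u $ i) * ((K * R * mat_adjoint K) *\<^sub>v v) $ i)"
    using K R K' v by (intro sesq_form_mult_mat_vec) auto
  also have "(K * R * mat_adjoint K) *\<^sub>v v = K *\<^sub>v (R *\<^sub>v (mat_adjoint K *\<^sub>v v))"
    using K R K' v by (simp add: assoc_mult_mat_vec[of _ n n _ n])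
  also have "(\<Sum>i<n. cnj (u $ i) * (K *\<^sub>v (R *\<^sub>v (mat_adjoint K *\<^sub>v v))) $ i)
      = (\<Sum>k<n. cnj ((mat_adjoint K *\<^sub>v u) $ k) * (R *\<^sub>v (mat_adjoint K *\<^sub>v v)) $ k)"
    using K R K' v by (intro sum_cnj_mult_mat_vec_adjoint[OF K u]) simp
  also have "\<dots> = sesq_form n R (mat_adjoint K *\<^sub>v u) (mat_adjoint K *\<^sub>v v)"
    using R K' v by (intro sesq_form_mult_mat_vec[symmetric]) auto
  finally show ?thesis .
qed

lemma index_congruence:
  assumes K: "K \<in> carrier_mat n n" and R: "R \<in> carrier_mat n n" and i: "i < n" and j: "j < n"
  shows "(K * R * mat_adjoint K) $$ (i, j)
       = (\<Sum>k<n. \<Sum>l<n. K $$ (i, k) * R $$ (k, l) * cnj (K $$ (j, l)))"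
proof -
  have "(K * R * mat_adjoint K) $$ (i, j)
      = (\<Sum>l<n. (\<Sum>k<n. K $$ (i, k) * R $$ (k, l)) * cnj (K $$ (j, l)))"
    using K R i j by (simp add: scalar_prod_def atLeast0LessThan index_mat_adjoint)
  also have "\<dots> = (\<Sum>l<n. \<Sum>k<n. K $$ (i, k) * R $$ (k, l) * cnj (K $$ (j, l)))"
    by (simp add: sum_distrib_right)
  also have "\<dots> = (\<Sum>k<n. \<Sum>l<n. K $$ (i, k) * R $$ (k, l) * cnj (K $$ (j, l)))"
    by (rule sum.swap)
  finally show ?thesis .
qed

lemma sesq_form_add:
  "X \<in> carrier_mat n n \<Longrightarrow> Y \<in> carrier_mat n n \<Longrightarrow>
   sesq_form n (X + Y) u v = sesq_form n X u v + sesq_form n Y u v"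
  by (simp add: sesq_form_def algebra_simps sum.distrib)

lemma sesq_form_hermitian:
  assumes R: "R \<in> carrier_mat n n" and h: "mat_adjoint R = R"
  shows "sesq_form n R u v = cnj (sesq_form n R v u)"
proof -
  have c: "cnj (R $$ (i, j)) = R $$ (j, i)" if "i < n" "j < n" for i j
    using index_mat_adjoint[of j R i] R h that by simp
  have "cnj (sesq_form n R v u) = (\<Sum>i<n. \<Sum>j<n. v $ i * cnj (R $$ (i, j)) * cnj (u $ j))"
    by (simp add: sesq_form_def)
  also have "\<dots> = (\<Sum>j<n. \<Sum>i<n. v $ i * cnj (R $$ (i, j)) * cnj (u $ j))"
    by (rule sum.swap)
  also have "\<dots> = sesq_form n R u v"
    unfolding sesq_form_def by (intro sum.cong refl) (simp add: c mult_ac)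
  finally show ?thesis by simp
qed

lemma sesq_form_self_expand:
  "sesq_form n R (vec n (\<lambda>i. x $ i + t * y $ i)) (vec n (\<lambda>i. x $ i + t * y $ i))
   = sesq_form n R x x + t * sesq_form n R x y + cnj t * sesq_form n R y x
     + cnj t * t * sesq_form n R y y"
  by (simp add: sesq_form_def algebra_simps sum.distrib sum_distrib_left)

lemma sesq_form_mat_diag:
  "sesq_form n (mat_diag n f) w w = (\<Sum>k<n. f k * (cnj (w $ k) * w $ k))"
  unfolding sesq_form_def mat_diag_def
  by (intro sum.cong refl) (simp add: if_distrib if_distribR sum.delta mult_ac cong: if_cong)

lemma density_matrix_carrier: "density_matrix n R \<Longrightarrow> R \<in> carrier_mat n n"
  by (simp add: density_matrix_def)

lemma density_matrix_sesq_form_cnj: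
  "density_matrix n R \<Longrightarrow> sesq_form n R u v = cnj (sesq_form n R v u)"
  unfolding density_matrix_def by (intro sesq_form_hermitian) auto

lemma density_matrix_nonneg:
  "density_matrix n R \<Longrightarrow> v \<in> carrier_vec n \<Longrightarrow> 0 \<le> Re (sesq_form n R v v)"
  by (simp add: density_matrix_def sesq_form_mult_mat_vec)

lemma density_matrix_null_vector:
  assumes D: "density_matrix n R" and x: "x \<in> carrier_vec n" and x0: "Re (sesq_form n R x x) = 0"
  shows "R *\<^sub>v x = 0\<^sub>v n"
proof -
  have R: "R \<in> carrier_mat n n" using D by (rule density_matrix_carrier)
  have orth: "sesq_form n R y x = 0" if y: "y \<in> carrier_vec n" for y
  proof -
    \<comment> \<open>positivity along \<open>x - s \<cdot> b \<cdot> y\<close> for small \<open>s > 0\<close>, where \<open>b = \<langle>y, R x\<rangle>\<close>\<close>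
    define b where "b = sesq_form n R y x"
    define q where "q = Re (sesq_form n R y y)"
    define s where "s = 1 / (q + 1)"
    have "q \<ge> 0" unfolding q_def using density_matrix_nonneg[OF D y] .
    then have s: "s > 0" "s * q < 1" unfolding s_def by (auto simp: field_simps)
    define t where "t = - complex_of_real s * b"
    have "0 \<le> Re (sesq_form n R (vec n (\<lambda>i. x $ i + t * y $ i)) (vec n (\<lambda>i. x $ i + t * y $ i)))"
      by (rule density_matrix_nonneg[OF D]) simp
    also have "\<dots> = Re (t * cnj b + cnj t * b) + Re (cnj t * t) * q"
      using x0 density_matrix_sesq_form_cnj[OF D, of x y]
      by (simp add: sesq_form_self_expand b_def q_def)
    also have "\<dots> = (cmod b)\<^sup>2 * (s * (s * q - 2))"
      by (simp add: t_def cmod_def power2_eq_square algebra_simps)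
    finally have "0 \<le> (cmod b)\<^sup>2 * (s * (s * q - 2))" .
    moreover have "s * (s * q - 2) < 0" using s by (intro mult_pos_neg) auto
    ultimately have "(cmod b)\<^sup>2 \<le> 0" by (smt (verit) mult_pos_neg)
    then show ?thesis unfolding b_def by simp
  qed
  define y where "y = R *\<^sub>v x"
  have y: "y \<in> carrier_vec n" unfolding y_def using R x by simp
  have "sesq_form n R y x = (\<Sum>i<n. cnj (y $ i) * y $ i)"
    using R x by (simp add: sesq_form_mult_mat_vec y_def)
  also have "\<dots> = complex_of_real (\<Sum>i<n. (cmod (y $ i))\<^sup>2)"
    unfolding of_real_sum by (intro sum.cong refl) (metis complex_norm_square mult.commute)
  finally have "(\<Sum>i<n. (cmod (y $ i))\<^sup>2) = 0"
    using orth[OF y] of_real_eq_0_iff by metis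
  then have "y $ i = 0" if "i < n" for i
    using that by (subst (asm) sum_nonneg_eq_0_iff) auto
  with y show ?thesis unfolding y_def[symmetric] by (intro eq_vecI) auto
qed

lemma apply_kraus_Cons: "apply_kraus n (K # Ks) R = K * R * mat_adjoint K + apply_kraus n Ks R"
  by (simp add: apply_kraus_def)

lemma apply_kraus_carrier:
  "R \<in> carrier_mat n n \<Longrightarrow> set Ks \<subseteq> carrier_mat n n \<Longrightarrow> apply_kraus n Ks R \<in> carrier_mat n n"
  by (induction Ks) (auto simp: apply_kraus_def mat_adjoint_carrier)

lemma sesq_form_apply_kraus:
  assumes "R \<in> carrier_mat n n" and "set Ks \<subseteq> carrier_mat n n"
  shows "sesq_form n (apply_kraus n Ks R) u v = (\<Sum>K\<leftarrow>Ks. sesq_form n (K * R * mat_adjoint K) u v)"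
  using assms
proof (induction Ks)
  case Nil
  then show ?case by (simp add: apply_kraus_def sesq_form_def)
next
  case (Cons K Ks)
  then have "K * R * mat_adjoint K \<in> carrier_mat n n" "apply_kraus n Ks R \<in> carrier_mat n n"
    by (auto simp: apply_kraus_carrier)
  with Cons show ?case by (simp add: apply_kraus_Cons sesq_form_add)
qed

lemma Re_sum_list: "Re (\<Sum>x\<leftarrow>xs. f x) = (\<Sum>x\<leftarrow>xs. Re (f x))"
  by (induction xs) auto

lemma apply_kraus_null_vector:
  assumes D: "density_matrix n R" and Ks: "set Ks \<subseteq> carrier_mat n n"
    and z: "z \<in> carrier_vec n" and null: "apply_kraus n Ks R *\<^sub>v z = 0\<^sub>v n"
    and K: "K \<in> set Ks"
  shows "R *\<^sub>v (mat_adjoint K *\<^sub>v z) = 0\<^sub>v n"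
proof -
  have R: "R \<in> carrier_mat n n" using D by (rule density_matrix_carrier)
  let ?q = "\<lambda>K. Re (sesq_form n R (mat_adjoint K *\<^sub>v z) (mat_adjoint K *\<^sub>v z))"
  have Kz: "mat_adjoint K *\<^sub>v z \<in> carrier_vec n" if "K \<in> set Ks" for K
  proof -
    have "mat_adjoint K \<in> carrier_mat n n" using that Ks mat_adjoint_carrier by blast
    with z show ?thesis by simp
  qed
  have "?q K = Re (sesq_form n (K * R * mat_adjoint K) z z)" if "K \<in> set Ks" for K
    using that Ks sesq_form_congruence[OF _ R z z] by auto
  then have "(\<Sum>K\<leftarrow>Ks. ?q K) = (\<Sum>K\<leftarrow>Ks. Re (sesq_form n (K * R * mat_adjoint K) z z))"
    by (intro arg_cong[where f = sum_list] map_cong) auto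
  also have "\<dots> = Re (sesq_form n (apply_kraus n Ks R) z z)"
    by (simp add: sesq_form_apply_kraus[OF R Ks] Re_sum_list)
  also have "\<dots> = 0"
    using R Ks z null by (simp add: sesq_form_mult_mat_vec apply_kraus_carrier)
  finally have "\<forall>q \<in> set (map ?q Ks). q = 0"
    using sum_list_nonneg_eq_0_iff[of "map ?q Ks"] density_matrix_nonneg[OF D Kz] by auto
  with K have "?q K = 0" by simp
  then show ?thesis by (rule density_matrix_null_vector[OF D Kz[OF K]])
qed

section \<open>Null vectors of a matrix with simple eigenvalue zero\<close>

lemma upper_triangular_null_vector:
  fixes B :: "'a::field mat"
  assumes B: "B \<in> carrier_mat n n" and ut: "upper_triangular B"
    and diag: "\<And>i. Suc i < n \<Longrightarrow> B $$ (i, i) \<noteq> 0"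
    and y: "y \<in> carrier_vec n" and null: "B *\<^sub>v y = 0\<^sub>v n" and last: "y $ (n - 1) = 0"
  shows "y = 0\<^sub>v n"
proof -
  have "y $ i = 0" if "i < n" for i
    using that
  proof (induction "n - i" arbitrary: i rule: less_induct)
    case less
    show ?case
    proof (cases "Suc i < n")
      case False
      with less.prems last show ?thesis by (simp add: Suc_leI not_less antisym_conv)
    next
      case True
      have "B $$ (i, j) * y $ j = 0" if "j < n" "j \<noteq> i" for j
      proof (cases "j < i")
        case True
        with ut B less.prems show ?thesis by (simp add: upper_triangular_def)
      next
        case False
        with that less.hyps[of j] show ?thesis by simp
      qed
      then have "(\<Sum>j\<in>{..<n} - {i}. B $$ (i, j) * y $ j) = 0"
        by (intro sum.neutral) auto
      moreover have "(\<Sum>j<n. B $$ (i, j) * y $ j)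
          = B $$ (i, i) * y $ i + (\<Sum>j\<in>{..<n} - {i}. B $$ (i, j) * y $ j)"
        using less.prems by (intro sum.remove) auto
      ultimately have "(\<Sum>j<n. B $$ (i, j) * y $ j) = B $$ (i, i) * y $ i"
        by simp
      moreover have "(\<Sum>j<n. B $$ (i, j) * y $ j) = 0"
        using null B y less.prems index_mult_mat_vec_sum[OF B y, of i] by simp
      ultimately show ?thesis using diag[OF True] by simp
    qed
  qed
  with y show ?thesis by (intro eq_vecI) auto
qed

lemma upper_triangular_null_vectors_proportional:
  fixes B :: "'a::field mat"
  assumes B: "B \<in> carrier_mat n n" and ut: "upper_triangular B"
    and diag: "\<And>i. Suc i < n \<Longrightarrow> B $$ (i, i) \<noteq> 0"
    and y: "y \<in> carrier_vec n" and null: "B *\<^sub>v y = 0\<^sub>v n"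
    and y': "y' \<in> carrier_vec n" and null': "B *\<^sub>v y' = 0\<^sub>v n" and nz: "y' \<noteq> 0\<^sub>v n"
  shows "\<exists>e. y = e \<cdot>\<^sub>v y'"
proof -
  have last: "y' $ (n - 1) \<noteq> 0"
  proof
    assume "y' $ (n - 1) = 0"
    with diag have "y' = 0\<^sub>v n" by (intro upper_triangular_null_vector[OF B ut _ y' null'])
    with nz show False ..
  qed
  define z where "z = y' $ (n - 1) \<cdot>\<^sub>v y - y $ (n - 1) \<cdot>\<^sub>v y'"
  have z: "z \<in> carrier_vec n" unfolding z_def using y y' by simp
  have "B *\<^sub>v z = y' $ (n - 1) \<cdot>\<^sub>v (B *\<^sub>v y) - y $ (n - 1) \<cdot>\<^sub>v (B *\<^sub>v y')"
    unfolding z_def using B y y' by (simp add: mult_minus_distrib_mat_vec mult_mat_vec)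
  then have Bz: "B *\<^sub>v z = 0\<^sub>v n" using null null' by auto
  have "n \<noteq> 0"
  proof
    assume "n = 0"
    with y' nz show False by auto
  qed
  with y y' have "z $ (n - 1) = 0" unfolding z_def by (simp add: mult.commute)
  with diag have "z = 0\<^sub>v n" by (intro upper_triangular_null_vector[OF B ut _ z Bz])
  define e where "e = y $ (n - 1) / y' $ (n - 1)"
  have "y $ i = e * y' $ i" if "i < n" for i
  proof -
    have "z $ i = 0" using \<open>z = 0\<^sub>v n\<close> that by simp
    with that y y' have eq: "y' $ (n - 1) * y $ i = y $ (n - 1) * y' $ i" unfolding z_def by simp
    have "y $ i = y' $ (n - 1) * y $ i / y' $ (n - 1)" using last by simp
    also have "\<dots> = e * y' $ i" unfolding e_def eq by simp
    finally show ?thesis .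
  qed
  with y y' have "y = e \<cdot>\<^sub>v y'" by (intro eq_vecI) auto
  then show ?thesis by blast
qed

lemma null_vectors_proportional:
  fixes R :: "'a::conjugatable_ordered_field mat"
  assumes R: "R \<in> carrier_mat n n"
    and char_poly: "char_poly R = (\<Prod>e\<leftarrow>es @ [0]. [:- e, 1:])" and es: "0 \<notin> set es"
    and x: "x \<in> carrier_vec n" and null: "R *\<^sub>v x = 0\<^sub>v n"
    and x': "x' \<in> carrier_vec n" and null': "R *\<^sub>v x' = 0\<^sub>v n" and nz: "x' \<noteq> 0\<^sub>v n"
  shows "\<exists>e. x = e \<cdot>\<^sub>v x'"
proof -
  obtain B P Q where "schur_decomposition R (es @ [0]) = (B, P, Q)"
    by (rule prod_cases3)
  from schur_decomposition[OF R char_poly this]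
  have sim: "similar_mat_wit R B P Q" and ut: "upper_triangular B" and dg: "diag_mat B = es @ [0]"
    by auto
  note wit = similar_mat_witD2[OF R sim]
  have B: "B \<in> carrier_mat n n" and P: "P \<in> carrier_mat n n" and Q: "Q \<in> carrier_mat n n"
    using wit by auto
  have n: "n = Suc (length es)"
    using arg_cong[OF dg, of length] B by (simp add: diag_mat_def)
  have diag: "B $$ (i, i) \<noteq> 0" if "Suc i < n" for i
  proof -
    have "B $$ (i, i) = diag_mat B ! i" using that B by (simp add: diag_mat_def)
    also have "\<dots> = es ! i" using that n by (simp add: dg nth_append)
    finally show ?thesis using that n es nth_mem by fastforce
  qed
  have QR: "Q * R = B * Q"
  proof -
    have "Q * R = Q * (P * B * Q)" using wit(3) by simp
    also have "\<dots> = (Q * P) * B * Q" using P B Q by (simp add: assoc_mult_mat[of _ n n _ n _ n])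
    finally show ?thesis using wit(2) B Q by simp
  qed
  have to_B: "B *\<^sub>v (Q *\<^sub>v v) = 0\<^sub>v n" if v: "v \<in> carrier_vec n" and Rv: "R *\<^sub>v v = 0\<^sub>v n" for v
  proof -
    have "B *\<^sub>v (Q *\<^sub>v v) = (Q * R) *\<^sub>v v" using B Q v by (simp add: QR)
    also have "\<dots> = Q *\<^sub>v (R *\<^sub>v v)" using Q R v by simp
    finally show ?thesis using Q by (simp add: Rv mult_mat_vec_zero)
  qed
  have recover: "P *\<^sub>v (Q *\<^sub>v v) = v" if "v \<in> carrier_vec n" for v
  proof -
    have "P *\<^sub>v (Q *\<^sub>v v) = (P * Q) *\<^sub>v v" using that P Q by simp
    then show ?thesis using that wit by simp
  qed
  have "Q *\<^sub>v x' \<noteq> 0\<^sub>v n"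
  proof
    assume "Q *\<^sub>v x' = 0\<^sub>v n"
    then have "x' = P *\<^sub>v 0\<^sub>v n" using recover[OF x'] by simp
    with nz P show False by (simp add: mult_mat_vec_zero)
  qed
  then obtain e where e: "Q *\<^sub>v x = e \<cdot>\<^sub>v (Q *\<^sub>v x')"
    using upper_triangular_null_vectors_proportional[OF B ut _ _ to_B[OF x null]
        _ to_B[OF x' null']] diag Q x x'
    by fastforce
  have "x = P *\<^sub>v (e \<cdot>\<^sub>v (Q *\<^sub>v x'))" using recover[OF x] by (simp add: e)
  also have "\<dots> = e \<cdot>\<^sub>v x'" using P Q x' recover[OF x'] by (simp add: mult_mat_vec)
  finally show ?thesis by blast
qed

section \<open>An entanglement witness and the coefficient determinant\<close>

text \<open>\<open>witness a X = tr (W X)\<close>, where \<open>W\<close> is the partial transpose of the projector onto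
  \<open>a |01\<rangle> - |10\<rangle>\<close>.\<close>
definition witness :: "real \<Rightarrow> complex mat \<Rightarrow> complex" where
  "witness a X =
     (of_real a)\<^sup>2 * X $$ (1, 1) + X $$ (2, 2) - of_real a * X $$ (0, 3) - of_real a * X $$ (3, 0)"

lemma witness_apply_kraus:
  assumes "R \<in> carrier_mat 4 4" and "set Ks \<subseteq> carrier_mat 4 4"
  shows "witness a (apply_kraus 4 Ks R) = (\<Sum>K\<leftarrow>Ks. witness a (K * R * mat_adjoint K))"
  using assms
proof (induction Ks)
  case Nil
  then show ?case by (simp add: apply_kraus_def witness_def)
next
  case (Cons K Ks)
  then have "K * R * mat_adjoint K \<in> carrier_mat 4 4" "apply_kraus 4 Ks R \<in> carrier_mat 4 4"
    by (auto simp: apply_kraus_carrier)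
  with Cons show ?case by (simp add: apply_kraus_Cons witness_def algebra_simps)
qed

lemma rank_one_2x2:
  fixes P :: "nat \<Rightarrow> nat \<Rightarrow> 'a::field"
  assumes "P 0 0 * P 1 1 = P 0 1 * P 1 0"
  shows "\<exists>x y. \<forall>c<2. \<forall>e<2. P c e = x c * y e"
proof -
  have "\<forall>c<2. \<forall>e<2. P c e = x c * y e"
    if "\<And>c e. c \<in> {0, 1} \<Longrightarrow> e \<in> {0, 1} \<Longrightarrow> P c e = x c * y e" for x y
    using that by (auto simp: less_2_cases_iff)
  moreover consider "P 0 0 \<noteq> 0" | "P 0 0 = 0" "P 0 1 \<noteq> 0" | "P 0 0 = 0" "P 0 1 = 0" by blast
  then have "\<exists>x y. \<forall>c \<in> {0, 1}. \<forall>e \<in> {0, 1}. P c e = x c * y e"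
  proof cases
    case 1
    then show ?thesis using assms
      by (intro exI[of _ "\<lambda>c. if c = 0 then 1 else P 1 0 / P 0 0"] exI[of _ "\<lambda>e. P 0 e"])
        (auto simp: field_simps)
  next
    case 2
    then show ?thesis using assms
      by (intro exI[of _ "\<lambda>c. if c = 0 then 1 else P 1 1 / P 0 1"] exI[of _ "\<lambda>e. P 0 e"])
        (auto simp: field_simps)
  next
    case 3
    then show ?thesis
      by (intro exI[of _ "\<lambda>c. if c = 0 then 0 else 1"] exI[of _ "\<lambda>e. P 1 e"]) auto
  qed
  ultimately show ?thesis by blast
qed

lemma witness_singular_product:
  assumes A: "A \<in> carrier_mat 2 2" and B: "B \<in> carrier_mat 2 2" and R: "R \<in> carrier_mat 4 4"
    and singular: "det A = 0 \<or> det B = 0"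
  shows "\<exists>g \<in> carrier_vec 4. witness a (kron A B * R * mat_adjoint (kron A B)) = sesq_form 4 R g g"
proof -
  define K where "K = kron A B"
  have K: "K \<in> carrier_mat 4 4" unfolding K_def using kron_carrier[OF A B] by simp
  define P where
    "P c e = of_real a * A $$ (0, c) * cnj (B $$ (1, e)) - A $$ (1, c) * cnj (B $$ (0, e))" for c e
  have "P 0 0 * P 1 1 - P 0 1 * P 1 0 = of_real a * det A * cnj (det B)"
    unfolding P_def det_2x2[OF A] det_2x2[OF B] by (simp add: algebra_simps)
  with singular have "P 0 0 * P 1 1 = P 0 1 * P 1 0" by auto
  then obtain x y where xy: "\<forall>c<2. \<forall>e<2. P c e = x c * y e"
    using rank_one_2x2 by blast
  define g where "g = vec 4 (\<lambda>k. cnj (x (k div 2)) * y (k mod 2))"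
  have coeff: "(of_real a)\<^sup>2 * K $$ (1, k) * cnj (K $$ (1, l)) + K $$ (2, k) * cnj (K $$ (2, l))
      - of_real a * K $$ (0, k) * cnj (K $$ (3, l)) - of_real a * K $$ (3, k) * cnj (K $$ (0, l))
      = cnj (g $ k) * g $ l" if k: "k < 4" and l: "l < 4" for k l
  proof -
    have "k div 2 < 2" "l div 2 < 2" "k mod 2 < 2" "l mod 2 < 2" using k l by auto
    then have "cnj (g $ k) * g $ l = P (k div 2) (l mod 2) * cnj (P (l div 2) (k mod 2))"
      unfolding g_def using xy k l by (simp add: algebra_simps)
    also have "\<dots> = (of_real a)\<^sup>2 * K $$ (1, k) * cnj (K $$ (1, l)) + K $$ (2, k) * cnj (K $$ (2, l))
      - of_real a * K $$ (0, k) * cnj (K $$ (3, l)) - of_real a * K $$ (3, k) * cnj (K $$ (0, l))"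
      unfolding P_def K_def using k l
      by (simp add: index_kron_2x2[OF A B] algebra_simps power2_eq_square)
    finally show ?thesis by simp
  qed
  have "witness a (K * R * mat_adjoint K) = (\<Sum>k<4. \<Sum>l<4. R $$ (k, l) *
      ((of_real a)\<^sup>2 * K $$ (1, k) * cnj (K $$ (1, l)) + K $$ (2, k) * cnj (K $$ (2, l))
      - of_real a * K $$ (0, k) * cnj (K $$ (3, l)) - of_real a * K $$ (3, k) * cnj (K $$ (0, l))))"
    unfolding witness_def
    by (simp add: index_congruence[OF K R] sum.distrib sum_distrib_left sum_subtractf algebra_simps)
  also have "\<dots> = sesq_form 4 R g g"
    unfolding sesq_form_def by (intro sum.cong refl, subst coeff) (auto simp: mult_ac)
  finally show ?thesis unfolding K_def using g_def by auto
qed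

text \<open>The determinant of the coefficient matrix of a two-qubit vector; it vanishes exactly on
  product vectors.\<close>
definition coeff_det :: "complex vec \<Rightarrow> complex" where
  "coeff_det v = v $ 0 * v $ 3 - v $ 1 * v $ 2"

lemma index_adjoint_kron_mult_vec:
  assumes A: "A \<in> carrier_mat 2 2" and B: "B \<in> carrier_mat 2 2" and z: "z \<in> carrier_vec 4"
    and k: "k < 4"
  shows "(mat_adjoint (kron A B) *\<^sub>v z) $ k
       = (\<Sum>i<4. cnj (A $$ (i div 2, k div 2) * B $$ (i mod 2, k mod 2)) * z $ i)"
proof -
  have K: "kron A B \<in> carrier_mat 4 4" using kron_carrier[OF A B] by simp
  then have "mat_adjoint (kron A B) \<in> carrier_mat 4 4" by (rule mat_adjoint_carrier)
  with A B K z k show ?thesis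
    by (simp add: index_mult_mat_vec_sum index_mat_adjoint index_kron_2x2[OF A B]
        del: index_mult_mat_vec)
qed

lemma adjoint_kron_mult_vec_carrier:
  assumes "A \<in> carrier_mat 2 2" and "B \<in> carrier_mat 2 2" and "z \<in> carrier_vec 4"
  shows "mat_adjoint (kron A B) *\<^sub>v z \<in> carrier_vec 4"
proof -
  have "mat_adjoint (kron A B) \<in> carrier_mat 4 4"
    using mat_adjoint_carrier[OF kron_carrier[OF assms(1,2)]] by simp
  with assms(3) show ?thesis by simp
qed

lemma coeff_det_adjoint_kron:
  assumes A: "A \<in> carrier_mat 2 2" and B: "B \<in> carrier_mat 2 2" and z: "z \<in> carrier_vec 4"
  shows "coeff_det (mat_adjoint (kron A B) *\<^sub>v z) = cnj (det A) * cnj (det B) * coeff_det z"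
  unfolding coeff_det_def det_2x2[OF A] det_2x2[OF B]
  by (simp add: index_adjoint_kron_mult_vec[OF A B z] sum_less_4 algebra_simps)

lemma coeff_det_smult: "v \<in> carrier_vec 4 \<Longrightarrow> coeff_det (e \<cdot>\<^sub>v v) = e\<^sup>2 * coeff_det v"
  by (simp add: coeff_det_def algebra_simps power2_eq_square)

lemma adjoint_kron_mult_unit_vec_nonzero:
  assumes A: "A \<in> carrier_mat 2 2" and B: "B \<in> carrier_mat 2 2"
    and det: "det A \<noteq> 0" "det B \<noteq> 0" and i: "i < 4"
  shows "mat_adjoint (kron A B) *\<^sub>v unit_vec 4 i \<noteq> 0\<^sub>v 4"
proof
  assume zero: "mat_adjoint (kron A B) *\<^sub>v unit_vec 4 i = 0\<^sub>v 4"
  have "A $$ (i div 2, c) * B $$ (i mod 2, e) = 0" if "c < 2" "e < 2" for c e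
  proof -
    have "(mat_adjoint (kron A B) *\<^sub>v unit_vec 4 i) $ (2 * c + e) = 0"
      using zero that by simp
    moreover have "(mat_adjoint (kron A B) *\<^sub>v unit_vec 4 i) $ (2 * c + e)
        = cnj (kron A B $$ (i, 2 * c + e))"
      using A B i that by (simp add: index_mat_adjoint)
    ultimately show ?thesis
      using A B i that by (simp add: index_kron_2x2)
  qed
  then have "(\<forall>c<2. A $$ (i div 2, c) = 0) \<or> (\<forall>e<2. B $$ (i mod 2, e) = 0)"
    by (metis less_2_cases_iff mult_eq_0_iff)
  moreover have "i div 2 = 0 \<or> i div 2 = 1" "i mod 2 = 0 \<or> i mod 2 = 1" using i by auto
  ultimately show False
    using det det_2x2[OF A] det_2x2[OF B] by auto
qed

lemma locc_null_vector_pullback: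
  assumes D: "density_matrix 4 R" and Ks: "locc_kraus 2 2 2 2 Ks"
    and z: "z \<in> carrier_vec 4" and null: "apply_kraus 4 Ks R *\<^sub>v z = 0\<^sub>v 4"
    and neg: "Re (witness a (apply_kraus 4 Ks R)) < 0"
  obtains A B where "A \<in> carrier_mat 2 2" "B \<in> carrier_mat 2 2" "det A \<noteq> 0" "det B \<noteq> 0"
    "R *\<^sub>v (mat_adjoint (kron A B) *\<^sub>v z) = 0\<^sub>v 4"
proof -
  have R: "R \<in> carrier_mat 4 4" using D by (rule density_matrix_carrier)
  have Ks4: "set Ks \<subseteq> carrier_mat 4 4" using Ks by (rule locc_kraus_carrier)
  have "(\<Sum>K\<leftarrow>Ks. Re (witness a (K * R * mat_adjoint K))) < 0"
    using neg by (simp add: witness_apply_kraus[OF R Ks4] Re_sum_list)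
  then obtain K where K: "K \<in> set Ks" and negK: "Re (witness a (K * R * mat_adjoint K)) < 0"
    using sum_list_nonneg[of "map (\<lambda>K. Re (witness a (K * R * mat_adjoint K))) Ks"]
    by (metis (no_types, lifting) imageE list.set_map not_le)
  then obtain A B where A: "A \<in> carrier_mat 2 2" and B: "B \<in> carrier_mat 2 2"
    and KAB: "K = kron A B"
    using locc_kraus_product_form[OF Ks] by blast
  have "det A \<noteq> 0 \<and> det B \<noteq> 0"
  proof (rule ccontr)
    assume "\<not> (det A \<noteq> 0 \<and> det B \<noteq> 0)"
    then obtain g where g: "g \<in> carrier_vec 4"
      and "witness a (K * R * mat_adjoint K) = sesq_form 4 R g g"
      using witness_singular_product[OF A B R] KAB by blast
    with negK density_matrix_nonneg[OF D g] show False by simp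
  qed
  moreover have "R *\<^sub>v (mat_adjoint K *\<^sub>v z) = 0\<^sub>v 4"
    by (rule apply_kraus_null_vector[OF D Ks4 z null K])
  ultimately show thesis using that A B KAB by blast
qed

lemma maximally_entangled_null_vector:
  assumes "maximally_entangled_in S R" and "S \<subseteq> two_qubit_states" and "\<sigma> \<in> S"
    and "z \<in> carrier_vec 4" and "\<sigma> *\<^sub>v z = 0\<^sub>v 4" and "Re (witness a \<sigma>) < 0"
  obtains A B where "A \<in> carrier_mat 2 2" "B \<in> carrier_mat 2 2" "det A \<noteq> 0" "det B \<noteq> 0"
    "R *\<^sub>v (mat_adjoint (kron A B) *\<^sub>v z) = 0\<^sub>v 4"
proof -
  from assms(1,3) obtain Ks where Ks: "locc_kraus 2 2 2 2 Ks" and \<sigma>: "\<sigma> = apply_kraus 4 Ks R"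
    unfolding maximally_entangled_in_def locc_map_def by metis
  have "density_matrix 4 R"
    using assms(1,2) unfolding maximally_entangled_in_def two_qubit_states_def by auto
  from locc_null_vector_pullback[OF this Ks assms(4)] assms(5,6) that show thesis
    unfolding \<sigma> by blast
qed

section \<open>The target states\<close>

text \<open>The columns are \<open>p = (3|00\<rangle> + 4|11\<rangle>)/5\<close>, \<open>|01\<rangle>\<close>, \<open>c q + s |10\<rangle>\<close> and
  \<open>-s q + c |10\<rangle>\<close> with \<open>q = (4|00\<rangle> - 3|11\<rangle>)/5\<close>, an orthonormal basis when \<open>c\<^sup>2 + s\<^sup>2 = 1\<close>.
  The target state has eigenvectors the first three columns, and its null vector, the last
  column, is a product vector exactly when \<open>s = 0\<close>.\<close>
definition target_basis_entry :: "real \<Rightarrow> real \<Rightarrow> nat \<Rightarrow> nat \<Rightarrow> real" where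
  "target_basis_entry c s i k =
     [[3/5, 0, 4 * c / 5, - 4 * s / 5],
      [0,   1, 0,         0],
      [0,   0, s,         c],
      [4/5, 0, - 3 * c / 5, 3 * s / 5]] ! i ! k"

definition target_basis :: "real \<Rightarrow> real \<Rightarrow> complex mat" where
  "target_basis c s = mat 4 4 (\<lambda>(i, k). complex_of_real (target_basis_entry c s i k))"

definition target_state :: "real \<Rightarrow> real \<Rightarrow> real \<Rightarrow> real \<Rightarrow> real \<Rightarrow> complex mat" where
  "target_state l1 l2 l3 c s =
     target_basis c s * mat_diag 4 (\<lambda>k. complex_of_real ([l1, l2, l3, 0] ! k))
     * mat_adjoint (target_basis c s)"

definition target_null_vector :: "real \<Rightarrow> real \<Rightarrow> complex vec" where
  "target_null_vector c s = vec 4 (\<lambda>i. complex_of_real ([- 4 * s / 5, 0, c, 3 * s / 5] ! i))"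

lemma index_target_state:
  assumes "i < 4" "j < 4"
  shows "target_state l1 l2 l3 c s $$ (i, j)
       = complex_of_real
           (\<Sum>k<4. target_basis_entry c s i k * [l1, l2, l3, 0] ! k * target_basis_entry c s j k)"
  using assms
  by (simp add: target_state_def target_basis_def scalar_prod_def atLeast0LessThan index_mat_adjoint
      sum_less_4 mat_diag_def)

lemma target_basis_carrier: "target_basis c s \<in> carrier_mat 4 4"
  by (simp add: target_basis_def)

lemma target_state_carrier: "target_state l1 l2 l3 c s \<in> carrier_mat 4 4"
  unfolding target_state_def
  by (rule mult_carrier_mat[OF mult_carrier_mat[OF target_basis_carrier mat_diag_dim]
        mat_adjoint_carrier[OF target_basis_carrier]])

lemma target_state_hermitian: "mat_adjoint (target_state l1 l2 l3 c s) = target_state l1 l2 l3 c s"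
proof (rule eq_matI)
  note dim = carrier_matD[OF target_state_carrier[of l1 l2 l3 c s]]
  fix i j assume "i < dim_row (target_state l1 l2 l3 c s)" "j < dim_col (target_state l1 l2 l3 c s)"
  with dim have ij: "i < 4" "j < 4" by simp_all
  with dim have "mat_adjoint (target_state l1 l2 l3 c s) $$ (i, j)
      = cnj (target_state l1 l2 l3 c s $$ (j, i))"
    by (simp add: index_mat_adjoint)
  also have "\<dots> = target_state l1 l2 l3 c s $$ (i, j)"
    using ij by (simp add: index_target_state mult_ac)
  finally show "mat_adjoint (target_state l1 l2 l3 c s) $$ (i, j)
      = target_state l1 l2 l3 c s $$ (i, j)" .
qed (simp_all add: carrier_matD[OF target_state_carrier])

lemma target_basis_unitary:
  assumes cs: "c\<^sup>2 + s\<^sup>2 = 1"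
  shows "target_basis c s * mat_adjoint (target_basis c s) = 1\<^sub>m 4"
    "mat_adjoint (target_basis c s) * target_basis c s = 1\<^sub>m 4"
proof -
  have cs': "complex_of_real s * complex_of_real s = 1 - complex_of_real c * complex_of_real c"
    using arg_cong[OF cs, of complex_of_real] by (simp add: power2_eq_square algebra_simps)
  then have cs'': "complex_of_real s * (complex_of_real s * x)
      = x - complex_of_real c * (complex_of_real c * x)" for x
    by (simp only: mult.assoc[symmetric]) (simp add: algebra_simps)
  note entries = target_basis_def target_basis_entry_def scalar_prod_def atLeast0LessThan sum_less_4
    index_mat_adjoint algebra_simps cs' cs'' add_divide_distrib diff_divide_distrib
  show "target_basis c s * mat_adjoint (target_basis c s) = 1\<^sub>m 4"
    "mat_adjoint (target_basis c s) * target_basis c s = 1\<^sub>m 4"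
    by (rule eq_matI; auto simp: entries dest!: less_4_cases)+
qed

lemma spectrum_class_char_poly:
  "[:- complex_of_real l1, 1:] * [:- complex_of_real l2, 1:] * [:- complex_of_real l3, 1:]
     * [:- complex_of_real l4, 1:]
   = (\<Prod>e\<leftarrow>map complex_of_real [l1, l2, l3, l4]. [:- e, 1:])"
  by (simp only: list.map prod_list.Cons prod_list.Nil mult_1_right mult.assoc)

lemma target_state_char_poly:
  assumes "c\<^sup>2 + s\<^sup>2 = 1"
  shows "char_poly (target_state l1 l2 l3 c s)
       = (\<Prod>e\<leftarrow>map complex_of_real [l1, l2, l3, 0]. [:- e, 1:])"
proof -
  define D where "D = mat_diag 4 (\<lambda>k. complex_of_real ([l1, l2, l3, 0] ! k))"
  have D: "D \<in> carrier_mat 4 4" unfolding D_def by simp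
  have "similar_mat (target_state l1 l2 l3 c s) D"
  proof (rule similar_matI[of _ _ "target_basis c s" "mat_adjoint (target_basis c s)" 4])
    show "{target_state l1 l2 l3 c s, D, target_basis c s, mat_adjoint (target_basis c s)}
        \<subseteq> carrier_mat 4 4"
      using target_state_carrier D target_basis_carrier mat_adjoint_carrier[OF target_basis_carrier]
      by auto
    show "target_state l1 l2 l3 c s = target_basis c s * D * mat_adjoint (target_basis c s)"
      unfolding target_state_def D_def ..
  qed (use target_basis_unitary[OF assms] in auto)
  then have "char_poly (target_state l1 l2 l3 c s) = char_poly D" by (rule char_poly_similar)
  also have "\<dots> = (\<Prod>e\<leftarrow>diag_mat D. [:- e, 1:])"
    by (rule char_poly_upper_triangular[OF D]) (simp add: upper_triangular_def D_def mat_diag_def)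
  also have "diag_mat D = map complex_of_real [l1, l2, l3, 0]"
    by (simp add: D_def diag_mat_def mat_diag_def upt_conv_Cons numeral_eq_Suc)
  finally show ?thesis .
qed

lemma target_state_nonneg:
  assumes "l1 \<ge> 0" "l2 \<ge> 0" "l3 \<ge> 0" and v: "v \<in> carrier_vec 4"
  shows "0 \<le> Re (sesq_form 4 (target_state l1 l2 l3 c s) v v)"
proof -
  define w where "w = mat_adjoint (target_basis c s) *\<^sub>v v"
  have "sesq_form 4 (target_state l1 l2 l3 c s) v v
      = sesq_form 4 (mat_diag 4 (\<lambda>k. complex_of_real ([l1, l2, l3, 0] ! k))) w w"
    unfolding target_state_def w_def
    by (rule sesq_form_congruence[OF target_basis_carrier _ v v]) simp
  also have "\<dots> = (\<Sum>k<4. complex_of_real ([l1, l2, l3, 0] ! k) * complex_of_real ((cmod (w $ k))\<^sup>2))"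
    unfolding sesq_form_mat_diag
    by (intro sum.cong refl) (simp only: complex_norm_square mult.commute)
  also have "\<dots> = complex_of_real (\<Sum>k<4. [l1, l2, l3, 0] ! k * (cmod (w $ k))\<^sup>2)"
    by (simp only: of_real_sum of_real_mult)
  finally show ?thesis
    using assms by (auto intro!: sum_nonneg mult_nonneg_nonneg dest!: less_4_cases)
qed

lemma target_state_trace:
  assumes "c\<^sup>2 + s\<^sup>2 = 1" and "l1 + l2 + l3 = 1"
  shows "mtrace (target_state l1 l2 l3 c s) = 1"
proof -
  have "mtrace (target_state l1 l2 l3 c s) = complex_of_real (l1 + l2 + l3 * (c\<^sup>2 + s\<^sup>2))"
    unfolding mtrace_def using carrier_matD[OF target_state_carrier[of l1 l2 l3 c s]]
    by (simp add: sum_less_4 index_target_state target_basis_entry_def algebra_simps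
        power2_eq_square)
  then show ?thesis using assms by simp
qed

lemma target_state_in_spectrum_class:
  assumes "l1 \<ge> 0" "l2 \<ge> 0" "l3 \<ge> 0" "l1 + l2 + l3 = 1" and cs: "c\<^sup>2 + s\<^sup>2 = 1"
  shows "target_state l1 l2 l3 c s \<in> spectrum_class l1 l2 l3 0"
proof -
  have "density_matrix 4 (target_state l1 l2 l3 c s)"
    unfolding density_matrix_def
    using target_state_carrier target_state_hermitian target_state_trace[OF cs assms(4)]
      target_state_nonneg[OF assms(1-3)]
    by (simp add: sesq_form_mult_mat_vec[OF target_state_carrier])
  then show ?thesis
    unfolding spectrum_class_def two_qubit_states_def spectrum_class_char_poly
    using target_state_char_poly[OF cs] by simp
qed

lemma target_null_vector_carrier: "target_null_vector c s \<in> carrier_vec 4"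
  by (simp add: target_null_vector_def)

lemma target_state_null_vector:
  "target_state l1 l2 l3 c s *\<^sub>v target_null_vector c s = 0\<^sub>v 4"
proof (rule eq_vecI)
  fix i assume "i < dim_vec (0\<^sub>v 4 :: complex vec)"
  then have i: "i < 4" by simp
  have "(target_state l1 l2 l3 c s *\<^sub>v target_null_vector c s) $ i
      = (\<Sum>j<4. target_state l1 l2 l3 c s $$ (i, j) * target_null_vector c s $ j)"
    by (rule index_mult_mat_vec_sum[OF target_state_carrier target_null_vector_carrier i])
  also have "\<dots> = 0"
    using less_4_cases[OF i]
    by (auto simp: sum_less_4 index_target_state target_basis_entry_def target_null_vector_def
        algebra_simps)
  finally show "(target_state l1 l2 l3 c s *\<^sub>v target_null_vector c s) $ i = 0\<^sub>v 4 $ i"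
    using i by simp
qed (simp add: target_null_vector_def carrier_matD[OF target_state_carrier])

lemma target_null_vector_unit: "target_null_vector 1 0 = unit_vec 4 2"
  by (rule eq_vecI) (auto simp: target_null_vector_def unit_vec_def dest!: less_4_cases)

lemma coeff_det_target_null_vector:
  "coeff_det (target_null_vector c s) = - complex_of_real (12 / 25 * s\<^sup>2)"
  by (simp add: coeff_det_def target_null_vector_def algebra_simps power2_eq_square)

lemma witness_target_state:
  "Re (witness a (target_state l1 l2 l3 c s)) = a\<^sup>2 * l2 + l3 * s\<^sup>2 - 24 / 25 * a * (l1 - l3 * c\<^sup>2)"
  by (simp add: witness_def index_target_state sum_less_4 target_basis_entry_def field_simps
      power2_eq_square)

lemma witness_target_state_neg:
  assumes l2: "0 < l2" and l3: "0 \<le> l3" "l2 + l3 \<le> 1" and gap: "l3 < l1"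
    and cs: "c\<^sup>2 + s\<^sup>2 = 1" and s: "s\<^sup>2 \<le> ((l1 - l3) / 5)\<^sup>2"
  shows "Re (witness ((l1 - l3) / (2 * l2)) (target_state l1 l2 l3 c s)) < 0"
proof -
  define d where "d = l1 - l3"
  define F where "F = Re (witness (d / (2 * l2)) (target_state l1 l2 l3 c s))"
  have d: "d > 0" using gap by (simp add: d_def)
  have c: "c\<^sup>2 = 1 - s\<^sup>2" using cs by simp
  have "F * l2 = - 23 / 100 * d\<^sup>2 + l3 * s\<^sup>2 * l2 - 12 / 25 * d * l3 * s\<^sup>2"
    using l2 unfolding F_def witness_target_state d_def c
    by (simp add: field_simps power2_eq_square)
  also have "\<dots> \<le> - 23 / 100 * d\<^sup>2 + (l2 * l3) * s\<^sup>2"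
    using d l3 by (simp add: algebra_simps)
  also have "\<dots> \<le> - 23 / 100 * d\<^sup>2 + 1 * (d / 5)\<^sup>2"
    using l2 l3 s unfolding d_def by (intro add_left_mono mult_mono) (auto simp: mult_le_one)
  also have "\<dots> < 0" using d by (simp add: power2_eq_square)
  finally have "F * l2 < 0" .
  with l2 show ?thesis unfolding F_def d_def by (simp add: mult_less_0_iff)
qed

lemma maximally_entangled_target_pullback:
  assumes max: "maximally_entangled_in (spectrum_class l1 l2 l3 0) R"
    and l: "0 < l2" "0 \<le> l3" "l3 < l1" "l1 + l2 + l3 = 1"
    and cs: "c\<^sup>2 + s\<^sup>2 = 1" and s: "s\<^sup>2 \<le> ((l1 - l3) / 5)\<^sup>2"
  obtains A B where "A \<in> carrier_mat 2 2" "B \<in> carrier_mat 2 2" "det A \<noteq> 0" "det B \<noteq> 0"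
    "R *\<^sub>v (mat_adjoint (kron A B) *\<^sub>v target_null_vector c s) = 0\<^sub>v 4"
proof (rule maximally_entangled_null_vector[OF max])
  show "spectrum_class l1 l2 l3 0 \<subseteq> two_qubit_states" by (auto simp: spectrum_class_def)
  show "target_state l1 l2 l3 c s \<in> spectrum_class l1 l2 l3 0"
    using l cs by (intro target_state_in_spectrum_class) auto
  show "Re (witness ((l1 - l3) / (2 * l2)) (target_state l1 l2 l3 c s)) < 0"
    using l cs s by (intro witness_target_state_neg) auto
qed (use that target_null_vector_carrier target_state_null_vector in auto)

lemma maximally_entangled_product_null_vector:
  assumes max: "maximally_entangled_in (spectrum_class l1 l2 l3 0) R"
    and l: "0 < l2" "0 \<le> l3" "l3 < l1" "l1 + l2 + l3 = 1"
  obtains x where "x \<in> carrier_vec 4" "x \<noteq> 0\<^sub>v 4" "R *\<^sub>v x = 0\<^sub>v 4" "coeff_det x = 0"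
proof -
  obtain A B where AB: "A \<in> carrier_mat 2 2" "B \<in> carrier_mat 2 2" "det A \<noteq> 0" "det B \<noteq> 0"
    and null: "R *\<^sub>v (mat_adjoint (kron A B) *\<^sub>v unit_vec 4 2) = 0\<^sub>v 4"
    using maximally_entangled_target_pullback[OF max l, of 1 0]
    by (auto simp: target_null_vector_unit)
  have nonzero: "mat_adjoint (kron A B) *\<^sub>v unit_vec 4 2 \<noteq> 0\<^sub>v 4"
    using adjoint_kron_mult_unit_vec_nonzero[OF AB] by simp
  have "coeff_det (mat_adjoint (kron A B) *\<^sub>v unit_vec 4 2) = 0"
    unfolding coeff_det_adjoint_kron[OF AB(1,2) unit_vec_carrier] by (simp add: coeff_det_def)
  then show thesis
    by (rule that[OF adjoint_kron_mult_vec_carrier[OF AB(1,2) unit_vec_carrier] nonzero null])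
qed

lemma maximally_entangled_entangled_null_vector:
  assumes max: "maximally_entangled_in (spectrum_class l1 l2 l3 0) R"
    and l: "0 < l2" "0 \<le> l3" "l3 < l1" "l1 + l2 + l3 = 1"
  obtains x where "x \<in> carrier_vec 4" "R *\<^sub>v x = 0\<^sub>v 4" "coeff_det x \<noteq> 0"
proof -
  define s where "s = (l1 - l3) / 5"
  define c where "c = sqrt (1 - s\<^sup>2)"
  have "s\<^sup>2 \<le> 1" using l by (simp add: s_def power_le_one)
  then have cs: "c\<^sup>2 + s\<^sup>2 = 1" by (simp add: c_def)
  obtain A B where AB: "A \<in> carrier_mat 2 2" "B \<in> carrier_mat 2 2" "det A \<noteq> 0" "det B \<noteq> 0"
    and null: "R *\<^sub>v (mat_adjoint (kron A B) *\<^sub>v target_null_vector c s) = 0\<^sub>v 4"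
    using maximally_entangled_target_pullback[OF max l cs] by (auto simp: s_def)
  have "coeff_det (mat_adjoint (kron A B) *\<^sub>v target_null_vector c s) \<noteq> 0"
    using AB l unfolding coeff_det_adjoint_kron[OF AB(1,2) target_null_vector_carrier]
      coeff_det_target_null_vector
    by (simp add: s_def)
  then show thesis
    by (rule that[OF adjoint_kron_mult_vec_carrier[OF AB(1,2) target_null_vector_carrier] null])
qed

lemma spectrum_class_null_vectors_proportional:
  assumes R: "R \<in> spectrum_class l1 l2 l3 0" and l: "l1 \<noteq> 0" "l2 \<noteq> 0" "l3 \<noteq> 0"
    and x: "x \<in> carrier_vec 4" "R *\<^sub>v x = 0\<^sub>v 4"
    and x': "x' \<in> carrier_vec 4" "R *\<^sub>v x' = 0\<^sub>v 4" "x' \<noteq> 0\<^sub>v 4"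
  shows "\<exists>e. x = e \<cdot>\<^sub>v x'"
proof (rule null_vectors_proportional[OF _ _ _ x x'])
  show "R \<in> carrier_mat 4 4"
    using R density_matrix_carrier by (auto simp: spectrum_class_def two_qubit_states_def)
  have "char_poly R = (\<Prod>e\<leftarrow>map complex_of_real [l1, l2, l3, 0]. [:- e, 1:])"
    using R unfolding spectrum_class_def spectrum_class_char_poly by blast
  also have "map complex_of_real [l1, l2, l3, 0] = map complex_of_real [l1, l2, l3] @ [0]"
    by simp
  finally show "char_poly R = (\<Prod>e\<leftarrow>map complex_of_real [l1, l2, l3] @ [0]. [:- e, 1:])" .
  show "0 \<notin> set (map complex_of_real [l1, l2, l3])" using l by auto
qed

theorem theorem2:
  fixes l1 l2 l3 :: real
  assumes "l1 \<ge> l2" and "l2 \<ge> l3" and "l3 \<ge> 0" and "l1 + l2 + l3 = 1"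
    and "l3 > 0" and "l1 \<noteq> l3"
  shows "\<not> (\<exists>\<rho>. maximally_entangled_in (spectrum_class l1 l2 l3 0) \<rho>)"
proof
  assume "\<exists>\<rho>. maximally_entangled_in (spectrum_class l1 l2 l3 0) \<rho>"
  then obtain R where max: "maximally_entangled_in (spectrum_class l1 l2 l3 0) R" ..
  have l: "0 < l2" "0 \<le> l3" "l3 < l1" "l1 + l2 + l3 = 1" using assms by auto
  obtain x0 where x0: "x0 \<in> carrier_vec 4" "x0 \<noteq> 0\<^sub>v 4" "R *\<^sub>v x0 = 0\<^sub>v 4" "coeff_det x0 = 0"
    using maximally_entangled_product_null_vector[OF max l] .
  obtain x1 where x1: "x1 \<in> carrier_vec 4" "R *\<^sub>v x1 = 0\<^sub>v 4" "coeff_det x1 \<noteq> 0"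
    using maximally_entangled_entangled_null_vector[OF max l] .
  have "R \<in> spectrum_class l1 l2 l3 0" using max by (simp add: maximally_entangled_in_def)
  then obtain e where "x1 = e \<cdot>\<^sub>v x0"
    using spectrum_class_null_vectors_proportional x0(1-3) x1(1,2) assms by fastforce
  then have "coeff_det x1 = e\<^sup>2 * coeff_det x0" by (simp add: coeff_det_smult x0(1))
  with x0(4) x1(3) show False by simp
qed

end
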